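(* Let $X_1,\dots,X_n$ be independent (not necessarily identically distributed) random variables and $X_1',\dots,X_n'$ be independent of them, with $X_1',\dots,X_n'$ independent and $X_i'$ equal in distribution to $X_i$. Let $\mathcal{G}$ be a countable class of bounded measurable real functions and $L:\mathcal{G}\to[0,\infty)$ satisfy $\sum_{g\in\mathcal{G}}e^{-L(g)}\le1$. Then for every $\gamma>0$, $$\mathbb{E}\sup_{g\in\mathcal{G}}\Big\{D_n'(g)-D_n(g)-\frac{\gamma}{n}L(g)-\frac{1}{2\gamma}s^2(g)\Big\}\le0,$$ where $D_n(g)=\frac1n\sum_{i=1}^ng^2(X_i)$, $D_n'(g)=\frac1n\sum_{i=1}^ng^2(X_i')$ and $s^2(g)=\frac1n\sum_{i=1}^n\big(g^2(X_i)-g^2(X_i')\big)^2$. *)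

theory Defs
  imports "HOL-Probability.Probability"
begin

definition Dn :: "nat \<Rightarrow> ('b \<Rightarrow> real) \<Rightarrow> (nat \<Rightarrow> 'a \<Rightarrow> 'b) \<Rightarrow> 'a \<Rightarrow> real" where
  "Dn n g X \<omega> = (1 / real n) * (\<Sum>i<n. (g (X i \<omega>))\<^sup>2)"

definition s2 :: "nat \<Rightarrow> ('b \<Rightarrow> real) \<Rightarrow> (nat \<Rightarrow> 'a \<Rightarrow> 'b) \<Rightarrow> (nat \<Rightarrow> 'a \<Rightarrow> 'b) \<Rightarrow> 'a \<Rightarrow> real" where
  "s2 n g X X' \<omega> = (1 / real n) * (\<Sum>i<n. ((g (X i \<omega>))\<^sup>2 - (g (X' i \<omega>))\<^sup>2)\<^sup>2)"

end

theory Submission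
  imports Defs
begin

(* Put c = n / gamma, A_i = g (X'_i)^2 - g (X_i)^2 and psi a = a / gamma - a^2 / (2 gamma^2); then c times
   the quantity under the supremum is (sum_i psi A_i) - L g.  Each A_i is symmetric and
   exp (psi a) + exp (psi (-a)) = 2 cosh (a / gamma) exp (-a^2 / (2 gamma^2)) <= 2, so E exp (psi A_i) <= 1
   and, by independence, E exp (sum_i psi A_i) <= 1.  Bounding the exponential of the supremum by the sum
   over G gives E exp (c * sup) <= sum_g exp (- L g) <= 1, and x <= exp x - 1 turns this into E sup <= 0. *)

lemma cosh_le_exp_half_square:
  fixes t :: real
  shows "cosh t \<le> exp (t\<^sup>2 / 2)"
proof -
  have nonneg_case: "cosh t \<le> exp (t\<^sup>2 / 2)" if "t \<ge> 0" for t :: real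
  proof -
    \<comment> \<open>Hoeffding's lemma for a fair coin with values \<open>0, 2t\<close>.\<close>
    have "- (2 * t) / 2 + ln (1 + (exp (2 * t) - 1) / 2) \<le> (2 * t)\<^sup>2 / 8"
      using Hoeffdings_lemma_aux[of "2 * t" "1/2"] that by simp
    hence "ln ((1 + exp (2 * t)) / 2) \<le> t + t\<^sup>2 / 2"
      by (simp add: power2_eq_square field_simps)
    moreover have "(1 + exp (2 * t)) / 2 > 0"
      by (simp add: add_pos_pos)
    ultimately have "(1 + exp (2 * t)) / 2 \<le> exp (t + t\<^sup>2 / 2)"
      by (metis exp_le_cancel_iff exp_ln)
    hence "(1 + exp (2 * t)) / 2 * exp (- t) \<le> exp (t + t\<^sup>2 / 2) * exp (- t)"
      by (rule mult_right_mono) simp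
    thus ?thesis
      by (simp add: cosh_field_def field_simps flip: exp_add)
  qed
  show ?thesis
    using nonneg_case[of t] nonneg_case[of "- t"] by (cases "t \<ge> 0") auto
qed

lemma exp_quadratic_penalty_symmetric_le:
  fixes a \<gamma> :: real
  assumes "\<gamma> > 0"
  shows "exp (a / \<gamma> - a\<^sup>2 / (2 * \<gamma>\<^sup>2)) + exp (- a / \<gamma> - (- a)\<^sup>2 / (2 * \<gamma>\<^sup>2)) \<le> 2"
proof -
  have "exp (a / \<gamma> - a\<^sup>2 / (2 * \<gamma>\<^sup>2)) + exp (- a / \<gamma> - (- a)\<^sup>2 / (2 * \<gamma>\<^sup>2))
      = 2 * cosh (a / \<gamma>) * exp (- ((a / \<gamma>)\<^sup>2 / 2))"
    by (simp add: cosh_field_def field_simps flip: exp_add)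
  also have "\<dots> \<le> 2 * exp ((a / \<gamma>)\<^sup>2 / 2) * exp (- ((a / \<gamma>)\<^sup>2 / 2))"
    by (intro mult_right_mono mult_left_mono cosh_le_exp_half_square) auto
  also have "\<dots> = 2"
    by (simp flip: exp_add)
  finally show ?thesis .
qed

lemma (in prob_space) nn_integral_exchangeable_le:
  fixes h :: "'b \<times> 'b \<Rightarrow> ennreal"
  assumes indep: "indep_var N U N V"
    and same_distr: "distr M N V = distr M N U"
    and h_measurable: "h \<in> borel_measurable (N \<Otimes>\<^sub>M N)"
    and h_sym_le: "\<And>x y. x \<in> space N \<Longrightarrow> y \<in> space N \<Longrightarrow> h (x, y) + h (y, x) \<le> 2 * c"
  shows "(\<integral>\<^sup>+\<omega>. h (U \<omega>, V \<omega>) \<partial>M) \<le> c"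
proof -
  define D where "D = distr M N U"
  have U: "random_variable N U" and V: "random_variable N V"
    and joint: "D \<Otimes>\<^sub>M D = distr M (N \<Otimes>\<^sub>M N) (\<lambda>\<omega>. (U \<omega>, V \<omega>))"
    using indep same_distr unfolding indep_var_distribution_eq D_def by auto
  interpret D: prob_space D
    unfolding D_def using U by (rule prob_space_distr)
  interpret DD: pair_prob_space D D ..
  have [measurable]: "h \<in> borel_measurable (D \<Otimes>\<^sub>M D)"
    using h_measurable by (simp add: D_def)
  have swap: "(\<integral>\<^sup>+z. h (snd z, fst z) \<partial>(D \<Otimes>\<^sub>M D)) = (\<integral>\<^sup>+z. h z \<partial>(D \<Otimes>\<^sub>M D))"
  proof -
    have "(\<integral>\<^sup>+z. h (snd z, fst z) \<partial>(D \<Otimes>\<^sub>M D)) = (\<integral>\<^sup>+x. \<integral>\<^sup>+y. h (y, x) \<partial>D \<partial>D)"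
      by (subst D.nn_integral_fst[symmetric]) simp_all
    also have "\<dots> = (\<integral>\<^sup>+z. h z \<partial>(D \<Otimes>\<^sub>M D))"
      by (rule DD.nn_integral_snd) measurable
    finally show ?thesis .
  qed
  have "2 * (\<integral>\<^sup>+\<omega>. h (U \<omega>, V \<omega>) \<partial>M) = 2 * (\<integral>\<^sup>+z. h z \<partial>(D \<Otimes>\<^sub>M D))"
    using U V h_measurable by (simp add: joint nn_integral_distr)
  also have "\<dots> = (\<integral>\<^sup>+z. h z + h (snd z, fst z) \<partial>(D \<Otimes>\<^sub>M D))"
    by (simp add: nn_integral_add swap mult_2)
  also have "\<dots> \<le> (\<integral>\<^sup>+z. 2 * c \<partial>(D \<Otimes>\<^sub>M D))"
    using h_sym_le by (intro nn_integral_mono) (auto simp: D_def space_pair_measure)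
  also have "\<dots> = 2 * c"
    by (simp add: DD.emeasure_space_1)
  finally show ?thesis
    by (simp add: ennreal_mult_le_mult_iff)
qed

lemma (in prob_space) indep_var_case_sum:
  assumes "indep_vars (\<lambda>_. N) (case_sum X X') (Inl ` I \<union> Inr ` I)" and "i \<in> I"
  shows "indep_var N (X i) N (X' i)"
proof -
  let ?Y = "\<lambda>J \<omega>. restrict (\<lambda>j. case_sum X X' j \<omega>) J"
  have "indep_var (PiM {Inl i} (\<lambda>_. N)) (?Y {Inl i}) (PiM {Inr i} (\<lambda>_. N)) (?Y {Inr i})"
    by (rule indep_var_restrict[OF assms(1)]) (use assms(2) in auto)
  hence "indep_var N ((\<lambda>f. f (Inl i)) \<circ> ?Y {Inl i}) N ((\<lambda>f. f (Inr i)) \<circ> ?Y {Inr i})"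
    by (rule indep_var_compose) (auto intro: measurable_component_singleton)
  thus ?thesis
    by (simp add: comp_def)
qed

lemma (in prob_space) random_variable_case_sum:
  assumes "indep_vars (\<lambda>_. N) (case_sum X X') (Inl ` I \<union> Inr ` I)" and "i \<in> I"
  shows "random_variable N (X i)" and "random_variable N (X' i)"
  using indep_var_case_sum[OF assms] by (auto dest: indep_var_rv1 indep_var_rv2)

lemma (in prob_space) nn_integral_exp_sum_exchangeable_le_1:
  fixes f :: "'b \<Rightarrow> real" and \<phi> :: "real \<Rightarrow> real"
  assumes indep: "indep_vars (\<lambda>_. N) (case_sum X X') (Inl ` I \<union> Inr ` I)" and "finite I"
    and same_distr: "\<And>i. i \<in> I \<Longrightarrow> distr M N (X' i) = distr M N (X i)"
    and [measurable]: "f \<in> borel_measurable N" "\<phi> \<in> borel_measurable borel"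
    and \<phi>_sym_le: "\<And>a. exp (\<phi> a) + exp (\<phi> (- a)) \<le> 2"
  shows "(\<integral>\<^sup>+\<omega>. exp (\<Sum>i\<in>I. \<phi> (f (X' i \<omega>) - f (X i \<omega>))) \<partial>M) \<le> 1"
proof -
  define W where "W i \<omega> = ennreal (exp (\<phi> (f (X' i \<omega>) - f (X i \<omega>))))" for i \<omega>
  have "indep_vars (\<lambda>i. PiM {Inl i, Inr i} (\<lambda>_. N))
          (\<lambda>i \<omega>. restrict (\<lambda>j. case_sum X X' j \<omega>) {Inl i, Inr i}) I"
    by (rule indep_vars_restrict[OF indep]) (auto simp: disjoint_family_on_def)
  hence "indep_vars (\<lambda>_. borel)
           (\<lambda>i \<omega>. (\<lambda>y. ennreal (exp (\<phi> (f (y (Inr i)) - f (y (Inl i))))))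
                     (restrict (\<lambda>j. case_sum X X' j \<omega>) {Inl i, Inr i})) I"
    by (rule indep_vars_compose2) measurable
  hence indep_W: "indep_vars (\<lambda>_. borel) W I"
    by (rule indep_vars_cong[THEN iffD1, rotated 3]) (auto simp: W_def)
  have W_le_1: "(\<integral>\<^sup>+\<omega>. W i \<omega> \<partial>M) \<le> 1" if "i \<in> I" for i
  proof -
    let ?h = "\<lambda>(x, y). ennreal (exp (\<phi> (f y - f x)))"
    have "(\<integral>\<^sup>+\<omega>. ?h (X i \<omega>, X' i \<omega>) \<partial>M) \<le> 1"
    proof (rule nn_integral_exchangeable_le)
      show "indep_var N (X i) N (X' i)"
        using indep that by (rule indep_var_case_sum)
      show "distr M N (X' i) = distr M N (X i)"
        using that by (rule same_distr)
      show "?h (x, y) + ?h (y, x) \<le> 2 * 1" for x y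
        using ennreal_leI[OF \<phi>_sym_le[of "f y - f x"]] by (simp flip: ennreal_plus)
    qed measurable
    thus ?thesis
      by (simp add: W_def)
  qed
  have "(\<integral>\<^sup>+\<omega>. exp (\<Sum>i\<in>I. \<phi> (f (X' i \<omega>) - f (X i \<omega>))) \<partial>M) = (\<integral>\<^sup>+\<omega>. (\<Prod>i\<in>I. W i \<omega>) \<partial>M)"
    using \<open>finite I\<close> by (simp add: W_def exp_sum prod_ennreal)
  also have "\<dots> = (\<Prod>i\<in>I. \<integral>\<^sup>+\<omega>. W i \<omega> \<partial>M)"
    using \<open>finite I\<close> indep_W by (rule indep_vars_nn_integral) simp
  also have "\<dots> \<le> 1"
    using W_le_1 by (intro prod_le_1) auto
  finally show ?thesis .
qed

lemma exp_SUP_le_nn_integral_count_space: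
  fixes f :: "'i \<Rightarrow> real"
  assumes "G \<noteq> {}" and "bdd_above (f ` G)"
  shows "ennreal (exp (SUP g\<in>G. f g)) \<le> (\<integral>\<^sup>+g. exp (f g) \<partial>count_space G)"
proof -
  have "mono (\<lambda>x. ennreal (exp x))"
    by (intro monoI ennreal_leI) simp
  moreover have "continuous (at_left t) (\<lambda>x. ennreal (exp x))" for t
    by (intro continuous_intros)
  ultimately have "ennreal (exp (Sup (f ` G))) = (SUP x\<in>f ` G. ennreal (exp x))"
    using assms by (intro continuous_at_Sup_mono) auto
  hence "ennreal (exp (SUP g\<in>G. f g)) = (SUP g\<in>G. ennreal (exp (f g)))"
    by (simp add: image_comp)
  also have "\<dots> \<le> (\<integral>\<^sup>+g. exp (f g) \<partial>count_space G)"
  proof (rule SUP_least)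
    fix g assume "g \<in> G"
    hence "ennreal (exp (f g)) = (\<integral>\<^sup>+h. exp (f h) * indicator {g} h \<partial>count_space G)"
      by (subst nn_integral_count_space'[where A = "{g}"]) auto
    also have "\<dots> \<le> (\<integral>\<^sup>+g. exp (f g) \<partial>count_space G)"
      by (intro nn_integral_mono) (simp add: indicator_def)
    finally show "ennreal (exp (f g)) \<le> (\<integral>\<^sup>+g. exp (f g) \<partial>count_space G)" .
  qed
  finally show ?thesis .
qed

lemma nn_integral_count_space_infsum:
  fixes f :: "'i \<Rightarrow> real"
  assumes "f summable_on A" and "\<And>x. x \<in> A \<Longrightarrow> 0 \<le> f x"
  shows "(\<integral>\<^sup>+x. f x \<partial>count_space A) = ennreal (\<Sum>\<^sub>\<infinity>x\<in>A. f x)"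
proof -
  have "(\<lambda>x. norm (f x)) summable_on A"
    using assms by (subst summable_on_cong[where g = f]) simp_all
  hence "Infinite_Set_Sum.abs_summable_on f A"
    using abs_summable_equivalent by blast
  thus ?thesis
    using assms(2) by (simp add: nn_integral_conv_infsetsum infsetsum_infsum)
qed

lemma (in prob_space) expectation_le_0_if_nn_integral_exp_le_1:
  fixes Z :: "'a \<Rightarrow> real"
  assumes "integrable M Z" and exp_le_1: "(\<integral>\<^sup>+\<omega>. exp (Z \<omega>) \<partial>M) \<le> 1"
  shows "expectation Z \<le> 0"
proof -
  have [measurable]: "Z \<in> borel_measurable M"
    using assms(1) by (rule borel_measurable_integrable)
  have "(\<integral>\<^sup>+\<omega>. exp (Z \<omega>) \<partial>M) < \<infinity>"
    by (rule le_less_trans[OF exp_le_1]) simp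
  hence integrable_exp: "integrable M (\<lambda>\<omega>. exp (Z \<omega>))"
    by (intro integrableI_nonneg) auto
  have "expectation Z \<le> expectation (\<lambda>\<omega>. exp (Z \<omega>) - 1)"
  proof (rule integral_mono)
    show "Z \<omega> \<le> exp (Z \<omega>) - 1" for \<omega>
      using exp_ge_add_one_self[of "Z \<omega>"] by linarith
  qed (use assms(1) integrable_exp in auto)
  also have "\<dots> = expectation (\<lambda>\<omega>. exp (Z \<omega>)) - 1"
    using integrable_exp by (simp add: prob_space)
  also have "expectation (\<lambda>\<omega>. exp (Z \<omega>)) \<le> 1"
    using exp_le_1 by (subst (asm) nn_integral_eq_integral[OF integrable_exp]) auto
  finally show ?thesis by simp
qed

definition excess :: "nat \<Rightarrow> real \<Rightarrow> ('b \<Rightarrow> real) \<Rightarrow> real \<Rightarrow> (nat \<Rightarrow> 'a \<Rightarrow> 'b) \<Rightarrow> (nat \<Rightarrow> 'a \<Rightarrow> 'b) \<Rightarrow> 'a \<Rightarrow> real"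
  where "excess n \<gamma> g l X X' \<omega> =
    Dn n g X' \<omega> - Dn n g X \<omega> - \<gamma> / real n * l - 1 / (2 * \<gamma>) * s2 n g X X' \<omega>"

lemma excess_scaled_eq:
  assumes "n > 0" and "\<gamma> > 0"
  shows "real n / \<gamma> * excess n \<gamma> g l X X' \<omega>
    = (\<Sum>i<n. ((g (X' i \<omega>))\<^sup>2 - (g (X i \<omega>))\<^sup>2) / \<gamma>
              - ((g (X' i \<omega>))\<^sup>2 - (g (X i \<omega>))\<^sup>2)\<^sup>2 / (2 * \<gamma>\<^sup>2)) - l"
proof -
  define A where "A i = (g (X' i \<omega>))\<^sup>2 - (g (X i \<omega>))\<^sup>2" for i
  have "Dn n g X' \<omega> - Dn n g X \<omega> = (\<Sum>i<n. A i) / real n"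
    by (simp add: Dn_def A_def sum_subtractf diff_divide_distrib)
  moreover have "s2 n g X X' \<omega> = (\<Sum>i<n. (A i)\<^sup>2) / real n"
    by (simp add: s2_def A_def power2_commute)
  ultimately have "real n / \<gamma> * excess n \<gamma> g l X X' \<omega>
      = real n / \<gamma> * ((\<Sum>i<n. A i) / real n - \<gamma> / real n * l - 1 / (2 * \<gamma>) * ((\<Sum>i<n. (A i)\<^sup>2) / real n))"
    by (simp add: excess_def)
  also have "\<dots> = (\<Sum>i<n. A i) / \<gamma> - (\<Sum>i<n. (A i)\<^sup>2) / (2 * \<gamma>\<^sup>2) - l"
    using assms by (simp add: field_simps power2_eq_square)
  also have "\<dots> = (\<Sum>i<n. A i / \<gamma> - (A i)\<^sup>2 / (2 * \<gamma>\<^sup>2)) - l"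
    by (simp add: sum_subtractf sum_divide_distrib)
  finally show ?thesis
    by (simp add: A_def)
qed

lemma excess_le:
  assumes "n > 0" and "\<gamma> > 0" and "l \<ge> 0"
  shows "excess n \<gamma> g l X X' \<omega> \<le> \<gamma> / 2"
proof -
  have penalty_le: "a / \<gamma> - a\<^sup>2 / (2 * \<gamma>\<^sup>2) \<le> 1 / 2" for a
  proof -
    have "a / \<gamma> - a\<^sup>2 / (2 * \<gamma>\<^sup>2) = 1 / 2 - (a / \<gamma> - 1)\<^sup>2 / 2"
      using assms(2) by (simp add: field_simps power2_eq_square)
    thus ?thesis by simp
  qed
  have "real n / \<gamma> * excess n \<gamma> g l X X' \<omega> \<le> (\<Sum>i<n. 1 / 2) - l"
    unfolding excess_scaled_eq[OF assms(1,2)] by (intro diff_right_mono sum_mono penalty_le)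
  also have "\<dots> \<le> real n / 2"
    using assms(3) by simp
  finally have "\<gamma> / real n * (real n / \<gamma> * excess n \<gamma> g l X X' \<omega>) \<le> \<gamma> / real n * (real n / 2)"
    using assms(1,2) by (intro mult_left_mono) simp_all
  thus ?thesis
    using assms(1,2) by simp
qed

lemma mean_le:
  fixes a :: "nat \<Rightarrow> real"
  assumes "n > 0" and "\<And>i. i < n \<Longrightarrow> a i \<le> b"
  shows "1 / real n * (\<Sum>i<n. a i) \<le> b"
proof -
  have "(\<Sum>i<n. a i) \<le> (\<Sum>i<n. b)"
    using assms(2) by (intro sum_mono) simp
  thus ?thesis
    using assms(1) by (simp add: field_simps)
qed

lemma excess_ge:
  assumes "n > 0" and "\<gamma> > 0"
    and "\<And>i. i < n \<Longrightarrow> \<bar>g (X i \<omega>)\<bar> \<le> B" and "\<And>i. i < n \<Longrightarrow> \<bar>g (X' i \<omega>)\<bar> \<le> B"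
  shows "- B\<^sup>2 - \<gamma> / real n * l - (B\<^sup>2)\<^sup>2 / (2 * \<gamma>) \<le> excess n \<gamma> g l X X' \<omega>"
proof -
  have sq_le: "(g (X i \<omega>))\<^sup>2 \<le> B\<^sup>2" "(g (X' i \<omega>))\<^sup>2 \<le> B\<^sup>2" if "i < n" for i
    using power_mono[OF assms(3)[OF that] abs_ge_zero, of 2]
      power_mono[OF assms(4)[OF that] abs_ge_zero, of 2] by simp_all
  have "Dn n g X \<omega> \<le> B\<^sup>2"
    unfolding Dn_def using assms(1) sq_le(1) by (rule mean_le)
  moreover have "((g (X i \<omega>))\<^sup>2 - (g (X' i \<omega>))\<^sup>2)\<^sup>2 \<le> (B\<^sup>2)\<^sup>2" if "i < n" for i
  proof -
    have "\<bar>(g (X i \<omega>))\<^sup>2 - (g (X' i \<omega>))\<^sup>2\<bar> \<le> B\<^sup>2"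
      using sq_le[OF that] zero_le_power2[of "g (X i \<omega>)"] zero_le_power2[of "g (X' i \<omega>)"]
      unfolding abs_le_iff by linarith
    from power_mono[OF this abs_ge_zero, of 2] show ?thesis by simp
  qed
  hence "s2 n g X X' \<omega> \<le> (B\<^sup>2)\<^sup>2"
    unfolding s2_def by (rule mean_le[OF assms(1)])
  hence "1 / (2 * \<gamma>) * s2 n g X X' \<omega> \<le> (B\<^sup>2)\<^sup>2 / (2 * \<gamma>)"
    using assms(2) by (simp add: divide_right_mono)
  moreover have "0 \<le> Dn n g X' \<omega>"
    by (simp add: Dn_def sum_nonneg)
  ultimately show ?thesis
    unfolding excess_def by linarith
qed

lemma nn_integral_exp_SUP_le:
  fixes Y :: "'i \<Rightarrow> 'a \<Rightarrow> real"
  assumes "countable G" and "G \<noteq> {}"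
    and "\<And>g. g \<in> G \<Longrightarrow> Y g \<in> borel_measurable M"
    and "\<And>\<omega>. \<omega> \<in> space M \<Longrightarrow> bdd_above ((\<lambda>g. Y g \<omega>) ` G)"
  shows "(\<integral>\<^sup>+\<omega>. exp (SUP g\<in>G. Y g \<omega>) \<partial>M) \<le> (\<integral>\<^sup>+g. \<integral>\<^sup>+\<omega>. exp (Y g \<omega>) \<partial>M \<partial>count_space G)"
proof -
  have "(\<integral>\<^sup>+\<omega>. exp (SUP g\<in>G. Y g \<omega>) \<partial>M) \<le> (\<integral>\<^sup>+\<omega>. \<integral>\<^sup>+g. exp (Y g \<omega>) \<partial>count_space G \<partial>M)"
    using assms(2,4) by (intro nn_integral_mono exp_SUP_le_nn_integral_count_space)
  also have "\<dots> = (\<integral>\<^sup>+g. \<integral>\<^sup>+\<omega>. exp (Y g \<omega>) \<partial>M \<partial>count_space G)"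
    using assms(1,3) by (intro nn_integral_count_space_nn_integral) measurable
  finally show ?thesis .
qed

lemma (in prob_space) integrable_SUP_of_bounded:
  fixes F :: "'i \<Rightarrow> 'a \<Rightarrow> real"
  assumes "countable G" and "g\<^sub>0 \<in> G"
    and "\<And>g. g \<in> G \<Longrightarrow> F g \<in> borel_measurable M"
    and upper: "\<And>g \<omega>. g \<in> G \<Longrightarrow> \<omega> \<in> space M \<Longrightarrow> F g \<omega> \<le> K"
    and lower: "\<And>\<omega>. \<omega> \<in> space M \<Longrightarrow> K' \<le> F g\<^sub>0 \<omega>"
  shows "integrable M (\<lambda>\<omega>. SUP g\<in>G. F g \<omega>)"
proof (rule integrable_const_bound[where B = "\<bar>K\<bar> + \<bar>K'\<bar>"])
  have bdd: "bdd_above ((\<lambda>g. F g \<omega>) ` G)" if "\<omega> \<in> space M" for \<omega>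
    using upper that by (intro bdd_aboveI2)
  show "(\<lambda>\<omega>. SUP g\<in>G. F g \<omega>) \<in> borel_measurable M"
    using assms(1,3) bdd by (rule borel_measurable_cSUP)
  have "K' \<le> (SUP g\<in>G. F g \<omega>) \<and> (SUP g\<in>G. F g \<omega>) \<le> K" if "\<omega> \<in> space M" for \<omega>
    using cSUP_upper[OF assms(2) bdd[OF that]] lower[OF that] upper[OF _ that] assms(2)
    by (auto intro: cSUP_least)
  thus "AE \<omega> in M. norm (SUP g\<in>G. F g \<omega>) \<le> \<bar>K\<bar> + \<bar>K'\<bar>"
    by (intro AE_I2) (smt (verit) real_norm_def)
qed

lemma excess_measurable:
  assumes "\<And>i. i < n \<Longrightarrow> X i \<in> measurable M N" and "\<And>i. i < n \<Longrightarrow> X' i \<in> measurable M N"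
    and "g \<in> borel_measurable N"
  shows "excess n \<gamma> g l X X' \<in> borel_measurable M"
  using assms unfolding excess_def[abs_def] Dn_def s2_def by measurable
lemma (in prob_space) nn_integral_exp_excess_le:
  fixes g :: "'b \<Rightarrow> real"
  assumes indep: "indep_vars (\<lambda>_. N) (case_sum X X') (Inl ` {..<n} \<union> Inr ` {..<n})"
    and same_distr: "\<And>i. i < n \<Longrightarrow> distr M N (X' i) = distr M N (X i)"
    and [measurable]: "g \<in> borel_measurable N"
    and "n > 0" and "\<gamma> > 0"
  shows "(\<integral>\<^sup>+\<omega>. exp (real n / \<gamma> * excess n \<gamma> g l X X' \<omega>) \<partial>M) \<le> exp (- l)"
proof -
  let ?Z = "\<lambda>\<omega>. \<Sum>i<n. ((g (X' i \<omega>))\<^sup>2 - (g (X i \<omega>))\<^sup>2) / \<gamma>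
                      - ((g (X' i \<omega>))\<^sup>2 - (g (X i \<omega>))\<^sup>2)\<^sup>2 / (2 * \<gamma>\<^sup>2)"
  have "(\<integral>\<^sup>+\<omega>. exp (?Z \<omega>) \<partial>M) \<le> 1"
  proof (rule nn_integral_exp_sum_exchangeable_le_1[OF indep,
        where f = "\<lambda>x. (g x)\<^sup>2" and \<phi> = "\<lambda>a. a / \<gamma> - a\<^sup>2 / (2 * \<gamma>\<^sup>2)"])
    show "exp (a / \<gamma> - a\<^sup>2 / (2 * \<gamma>\<^sup>2)) + exp (- a / \<gamma> - (- a)\<^sup>2 / (2 * \<gamma>\<^sup>2)) \<le> 2" for a
      using \<open>\<gamma> > 0\<close> by (rule exp_quadratic_penalty_symmetric_le)
  qed (use same_distr in auto)
  note [measurable] = random_variable_case_sum[OF indep]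
  have "exp (real n / \<gamma> * excess n \<gamma> g l X X' \<omega>) = exp (- l) * exp (?Z \<omega>)" for \<omega>
    unfolding excess_scaled_eq[OF assms(4,5)] by (simp add: exp_diff exp_minus field_simps)
  hence "(\<integral>\<^sup>+\<omega>. exp (real n / \<gamma> * excess n \<gamma> g l X X' \<omega>) \<partial>M)
      = (\<integral>\<^sup>+\<omega>. ennreal (exp (- l)) * exp (?Z \<omega>) \<partial>M)"
    by (simp add: ennreal_mult)
  also have "\<dots> = exp (- l) * (\<integral>\<^sup>+\<omega>. exp (?Z \<omega>) \<partial>M)"
    by (rule nn_integral_cmult) measurable
  also have "\<dots> \<le> ennreal (exp (- l)) * 1"
    using \<open>(\<integral>\<^sup>+\<omega>. exp (?Z \<omega>) \<partial>M) \<le> 1\<close> by (rule mult_left_mono) simp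
  finally show ?thesis
    by simp
qed

lemma (in prob_space) nn_integral_exp_SUP_excess_le_1:
  fixes G :: "('b \<Rightarrow> real) set"
  assumes indep: "indep_vars (\<lambda>_. N) (case_sum X X') (Inl ` {..<n} \<union> Inr ` {..<n})"
    and same_distr: "\<And>i. i < n \<Longrightarrow> distr M N (X' i) = distr M N (X i)"
    and "countable G" and "G \<noteq> {}" and G_measurable: "\<And>g. g \<in> G \<Longrightarrow> g \<in> borel_measurable N"
    and L_nonneg: "\<And>g. g \<in> G \<Longrightarrow> L g \<ge> 0"
    and "(\<lambda>g. exp (- L g)) summable_on G" and "(\<Sum>\<^sub>\<infinity>g\<in>G. exp (- L g)) \<le> 1"
    and "n > 0" and "\<gamma> > 0"
  shows "(\<integral>\<^sup>+\<omega>. exp (real n / \<gamma> * (SUP g\<in>G. excess n \<gamma> g (L g) X X' \<omega>)) \<partial>M) \<le> 1"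
proof -
  let ?c = "real n / \<gamma>"
  have measurable: "(\<lambda>\<omega>. ?c * excess n \<gamma> g (L g) X X' \<omega>) \<in> borel_measurable M" if "g \<in> G" for g
    using random_variable_case_sum[OF indep] G_measurable[OF that]
    by (intro borel_measurable_times borel_measurable_const excess_measurable) auto
  have bounded: "bdd_above ((\<lambda>g. k * excess n \<gamma> g (L g) X X' \<omega>) ` G)" if "k \<ge> 0" for k \<omega>
    using excess_le[OF \<open>n > 0\<close> \<open>\<gamma> > 0\<close> L_nonneg] that
    by (intro bdd_aboveI2[where M = "k * (\<gamma> / 2)"] mult_left_mono)
  have "mono (\<lambda>x. ?c * x)"
    using \<open>\<gamma> > 0\<close> by (intro monoI mult_left_mono) simp_all
  moreover have "continuous (at_left t) (\<lambda>x. ?c * x)" for t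
    by (intro continuous_intros)
  ultimately have "?c * Sup (F ` G) = (SUP x\<in>F ` G. ?c * x)" if "bdd_above (F ` G)" for F
    using \<open>G \<noteq> {}\<close> that by (intro continuous_at_Sup_mono) auto
  hence "?c * (SUP g\<in>G. excess n \<gamma> g (L g) X X' \<omega>) = (SUP g\<in>G. ?c * excess n \<gamma> g (L g) X X' \<omega>)" for \<omega>
    using bounded[of 1 \<omega>] by (simp add: image_comp)
  hence "(\<integral>\<^sup>+\<omega>. exp (?c * (SUP g\<in>G. excess n \<gamma> g (L g) X X' \<omega>)) \<partial>M)
      = (\<integral>\<^sup>+\<omega>. exp (SUP g\<in>G. ?c * excess n \<gamma> g (L g) X X' \<omega>) \<partial>M)"
    by simp
  also have "\<dots> \<le> (\<integral>\<^sup>+g. \<integral>\<^sup>+\<omega>. exp (?c * excess n \<gamma> g (L g) X X' \<omega>) \<partial>M \<partial>count_space G)"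
    using \<open>\<gamma> > 0\<close> by (intro nn_integral_exp_SUP_le \<open>countable G\<close> \<open>G \<noteq> {}\<close> measurable bounded) simp_all
  also have "\<dots> \<le> (\<integral>\<^sup>+g. exp (- L g) \<partial>count_space G)"
    using \<open>n > 0\<close> \<open>\<gamma> > 0\<close> G_measurable
    by (intro nn_integral_mono nn_integral_exp_excess_le[OF indep same_distr]) auto
  also have "\<dots> = ennreal (\<Sum>\<^sub>\<infinity>g\<in>G. exp (- L g))"
    using \<open>(\<lambda>g. exp (- L g)) summable_on G\<close> by (rule nn_integral_count_space_infsum) simp
  also have "\<dots> \<le> 1"
    using \<open>(\<Sum>\<^sub>\<infinity>g\<in>G. exp (- L g)) \<le> 1\<close> by simp
  finally show ?thesis .
qed

lemma (in prob_space) integrable_SUP_excess: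
  fixes G :: "('b \<Rightarrow> real) set"
  assumes indep: "indep_vars (\<lambda>_. N) (case_sum X X') (Inl ` {..<n} \<union> Inr ` {..<n})"
    and "countable G" and "G \<noteq> {}" and G_measurable: "\<And>g. g \<in> G \<Longrightarrow> g \<in> borel_measurable N"
    and G_bounded: "\<And>g. g \<in> G \<Longrightarrow> bounded (g ` space N)"
    and L_nonneg: "\<And>g. g \<in> G \<Longrightarrow> L g \<ge> 0"
    and "n > 0" and "\<gamma> > 0"
  shows "integrable M (\<lambda>\<omega>. SUP g\<in>G. excess n \<gamma> g (L g) X X' \<omega>)"
proof -
  obtain g\<^sub>0 where "g\<^sub>0 \<in> G"
    using \<open>G \<noteq> {}\<close> by blast
  then obtain B where B: "\<And>x. x \<in> space N \<Longrightarrow> \<bar>g\<^sub>0 x\<bar> \<le> B"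
    using G_bounded unfolding bounded_real by blast
  show ?thesis
  proof (rule integrable_SUP_of_bounded[OF \<open>countable G\<close> \<open>g\<^sub>0 \<in> G\<close>])
    show "excess n \<gamma> g (L g) X X' \<in> borel_measurable M" if "g \<in> G" for g
      using random_variable_case_sum[OF indep] G_measurable[OF that]
      by (intro excess_measurable) auto
    show "excess n \<gamma> g (L g) X X' \<omega> \<le> \<gamma> / 2" if "g \<in> G" for g \<omega>
      using \<open>n > 0\<close> \<open>\<gamma> > 0\<close> L_nonneg[OF that] by (rule excess_le)
    show "- B\<^sup>2 - \<gamma> / real n * L g\<^sub>0 - (B\<^sup>2)\<^sup>2 / (2 * \<gamma>) \<le> excess n \<gamma> g\<^sub>0 (L g\<^sub>0) X X' \<omega>"
      if "\<omega> \<in> space M" for \<omega>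
      using \<open>n > 0\<close> \<open>\<gamma> > 0\<close>
      by (intro excess_ge B measurable_space[OF _ that] random_variable_case_sum[OF indep]) auto
  qed
qed

theorem lemma1:
  fixes M :: "'a measure" and N :: "'b measure"
    and X X' :: "nat \<Rightarrow> 'a \<Rightarrow> 'b" and n :: nat
    and G :: "('b \<Rightarrow> real) set" and L :: "('b \<Rightarrow> real) \<Rightarrow> real" and \<gamma> :: real
  assumes "prob_space M"
    and "prob_space.indep_vars M (\<lambda>_. N) (case_sum X X') (Inl ` {..<n} \<union> Inr ` {..<n})"
    and "\<And>i. i < n \<Longrightarrow> distr M N (X' i) = distr M N (X i)"
    and "countable G" and "G \<noteq> {}"
    and "\<And>g. g \<in> G \<Longrightarrow> g \<in> borel_measurable N"
    and "\<And>g. g \<in> G \<Longrightarrow> bounded (g ` space N)"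
    and "\<And>g. g \<in> G \<Longrightarrow> L g \<ge> 0"
    and "(\<lambda>g. exp (- L g)) summable_on G"
    and "(\<Sum>\<^sub>\<infinity>g\<in>G. exp (- L g)) \<le> 1"
    and "\<gamma> > 0"
  shows "integrable M (\<lambda>\<omega>. SUP g\<in>G. Dn n g X' \<omega> - Dn n g X \<omega> - \<gamma> / real n * L g
                                  - 1 / (2 * \<gamma>) * s2 n g X X' \<omega>)
    \<and> prob_space.expectation M (\<lambda>\<omega>. SUP g\<in>G. Dn n g X' \<omega> - Dn n g X \<omega> - \<gamma> / real n * L g
                                  - 1 / (2 * \<gamma>) * s2 n g X X' \<omega>) \<le> 0"
proof -
  interpret prob_space M by fact
  let ?S = "\<lambda>\<omega>. SUP g\<in>G. excess n \<gamma> g (L g) X X' \<omega>"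
  have "integrable M ?S \<and> expectation ?S \<le> 0"
  proof (cases "n = 0")
    case True
    thus ?thesis using \<open>G \<noteq> {}\<close> by (simp add: excess_def Dn_def s2_def)
  next
    case False
    hence "n > 0" by simp
    have "integrable M ?S"
      by (rule integrable_SUP_excess[OF assms(2) assms(4-8) \<open>n > 0\<close> assms(11)])
    moreover have "(\<integral>\<^sup>+\<omega>. exp (real n / \<gamma> * ?S \<omega>) \<partial>M) \<le> 1"
      by (rule nn_integral_exp_SUP_excess_le_1[OF assms(2-6) assms(8-10) \<open>n > 0\<close> assms(11)])
    ultimately have "expectation (\<lambda>\<omega>. real n / \<gamma> * ?S \<omega>) \<le> 0"
      by (intro expectation_le_0_if_nn_integral_exp_le_1) auto
    with \<open>integrable M ?S\<close> show ?thesis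
      using \<open>n > 0\<close> \<open>\<gamma> > 0\<close> by (simp add: divide_le_0_iff mult_le_0_iff)
  qed
  thus ?thesis
    by (simp add: excess_def)
qed

end
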